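(* Let $\mathfrak n$ be a finite-dimensional 2-step nilpotent Lie algebra over a field $k$ of characteristic zero, with center $\mathfrak z$ and a linear complement $W$ of $\mathfrak z$ in $\mathfrak n$. Then $(\Lambda^2\mathfrak n)^{\mathfrak n}\subseteq (W\wedge\mathfrak z)\oplus\Lambda^2\mathfrak z$, i.e. every $\mathfrak n$-invariant element of $\Lambda^2\mathfrak n$ has zero component in $\Lambda^2W$ with respect to $\Lambda^2\mathfrak n=\Lambda^2W\oplus(W\wedge\mathfrak z)\oplus\Lambda^2\mathfrak z$.
   Context: 2-step nilpotent means $[\mathfrak n,[\mathfrak n,\mathfrak n]]=0$, so $[\mathfrak n,\mathfrak n]\subseteq\mathfrak z$. $\mathfrak n$ acts on $\Lambda^2\mathfrak n$ by $\mathrm{ad}_x(a\wedge b)=[x,a]\wedge b+a\wedge[x,b]$; $(\Lambda^2\mathfrak n)^{\mathfrak n}$ is the set of elements killed by all $\mathrm{ad}_x$. *)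

theory Defs
  imports "HOL-Analysis.Analysis"
begin

text \<open>
  The tensor square n (x) n is represented by d x d arrays 'k^'n^'n
  (entry (i,j) = coefficient of e_i (x) e_j), and Lambda^2 n by the antisymmetric
  tensors, with a /\ b = a (x) b - b (x) a.
\<close>

definition is_lie_bracket :: "('k::field ^ 'n \<Rightarrow> 'k ^ 'n \<Rightarrow> 'k ^ 'n) \<Rightarrow> bool" where
  "is_lie_bracket br \<longleftrightarrow>
     (\<forall>x y z. br (x + y) z = br x z + br y z) \<and>
     (\<forall>x y z. br x (y + z) = br x y + br x z) \<and>
     (\<forall>c x y. br (c *s x) y = c *s br x y) \<and>
     (\<forall>c x y. br x (c *s y) = c *s br x y) \<and>
     (\<forall>x. br x x = 0) \<and>
     (\<forall>x y z. br x (br y z) + br y (br z x) + br z (br x y) = 0)"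

definition lie_center :: "('k::field ^ 'n \<Rightarrow> 'k ^ 'n \<Rightarrow> 'k ^ 'n) \<Rightarrow> ('k ^ 'n) set" where
  "lie_center br = {z. \<forall>x. br x z = 0}"

definition two_step_nilpotent :: "('k::field ^ 'n \<Rightarrow> 'k ^ 'n \<Rightarrow> 'k ^ 'n) \<Rightarrow> bool" where
  "two_step_nilpotent br \<longleftrightarrow> (\<forall>x y z. br x (br y z) = 0)"

definition is_subspace :: "('k::field ^ 'n) set \<Rightarrow> bool" where
  "is_subspace S \<longleftrightarrow> 0 \<in> S \<and> (\<forall>x\<in>S. \<forall>y\<in>S. x + y \<in> S) \<and> (\<forall>c. \<forall>x\<in>S. c *s x \<in> S)"

definition is_linear_complement :: "('k::field ^ 'n) set \<Rightarrow> ('k ^ 'n) set \<Rightarrow> bool" where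
  "is_linear_complement W Z \<longleftrightarrow> is_subspace W \<and> W \<inter> Z = {0} \<and>
     (\<forall>v. \<exists>w\<in>W. \<exists>z\<in>Z. v = w + z)"

definition tensor :: "'k::field ^ 'n \<Rightarrow> 'k ^ 'n \<Rightarrow> 'k ^ 'n ^ 'n" where
  "tensor a b = (\<chi> i j. a $ i * b $ j)"

definition wedge :: "'k::field ^ 'n \<Rightarrow> 'k ^ 'n \<Rightarrow> 'k ^ 'n ^ 'n" where
  "wedge a b = tensor a b - tensor b a"

definition tscale :: "'k::field \<Rightarrow> 'k ^ 'n ^ 'n \<Rightarrow> 'k ^ 'n ^ 'n" where
  "tscale c A = (\<chi> i j. c * A $ i $ j)"

definition Lambda2 :: "('k::field ^ 'n ^ 'n) set" where
  "Lambda2 = {A. \<forall>i j. A $ i $ j = - (A $ j $ i)}"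

text \<open>ad_x on n (x) n, extended linearly from ad_x(a (x) b) = [x,a] (x) b + a (x) [x,b];
  on a /\ b this gives [x,a] /\ b + a /\ [x,b].\<close>
definition ad2 :: "('k::field ^ 'n \<Rightarrow> 'k ^ 'n \<Rightarrow> 'k ^ 'n) \<Rightarrow> 'k ^ 'n \<Rightarrow> 'k ^ 'n ^ 'n \<Rightarrow> 'k ^ 'n ^ 'n" where
  "ad2 br x A = (\<Sum>k\<in>UNIV. \<Sum>l\<in>UNIV. tscale (A $ k $ l)
      (tensor (br x (axis k 1)) (axis l 1) + tensor (axis k 1) (br x (axis l 1))))"

definition invariants2 :: "('k::field ^ 'n \<Rightarrow> 'k ^ 'n \<Rightarrow> 'k ^ 'n) \<Rightarrow> ('k ^ 'n ^ 'n) set" where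
  "invariants2 br = {A \<in> Lambda2. \<forall>x. ad2 br x A = 0}"

definition wedge_span :: "(('k::field ^ 'n) \<times> ('k ^ 'n)) set \<Rightarrow> ('k ^ 'n ^ 'n) set" where
  "wedge_span P = {A. \<exists>m (c :: nat \<Rightarrow> 'k) a b. (\<forall>i<m. (a i, b i) \<in> P) \<and>
       A = (\<Sum>i<m. tscale (c i) (wedge (a i) (b i)))}"

end

theory Submission
  imports Defs
begin

text \<open>
  View 2-tensors as matrices, let P be the projection onto W along the centre z and Q = 1 - P.
  Then A = P A P^T + (P A Q^T + Q A P^T) + Q A Q^T, and for antisymmetric A the last two
  summands are combinations of wedges of columns of P and Q, i.e. lie in W /\ z and z /\ z
  (writing Q A Q^T this way needs A/2, hence characteristic zero).
  Invariance says ad_x A + A ad_x^T = 0. As ad_x takes values in z and vanishes on z,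
  P ad_x = 0 and ad_x P = ad_x; so ad_x (P A P^T) = ad_x A P^T = - A (P ad_x)^T = 0.
  The columns of P A P^T are therefore central and lie in W, so P A P^T = 0.
\<close>

lemma wedge_span_zero: "0 \<in> wedge_span P"
  unfolding wedge_span_def by (rule CollectI, rule exI[of _ 0]) auto

lemma wedge_span_single: "(a, b) \<in> P \<Longrightarrow> tscale c (wedge a b) \<in> wedge_span P"
  unfolding wedge_span_def
  by (rule CollectI, rule exI[of _ 1], rule exI[of _ "\<lambda>_. c"], rule exI[of _ "\<lambda>_. a"],
      rule exI[of _ "\<lambda>_. b"]) auto

lemma wedge_span_add_single:
  assumes "X \<in> wedge_span P" "(a', b') \<in> P"
  shows "X + tscale c' (wedge a' b') \<in> wedge_span P"
proof -
  obtain m :: nat and c a b where P: "\<forall>i<m. (a i, b i) \<in> P"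
    and X: "X = (\<Sum>i<m. tscale (c i) (wedge (a i) (b i)))"
    using assms(1) unfolding wedge_span_def by (auto simp del: lessThan_iff)
  have "X + tscale c' (wedge a' b') =
      (\<Sum>i<Suc m. tscale ((c(m := c')) i) (wedge ((a(m := a')) i) ((b(m := b')) i)))"
    unfolding X sum.lessThan_Suc by (auto intro!: sum.cong)
  moreover have "\<forall>i<Suc m. ((a(m := a')) i, (b(m := b')) i) \<in> P"
    using P assms(2) by (auto simp: less_Suc_eq)
  ultimately show ?thesis unfolding wedge_span_def by blast
qed

lemma wedge_span_add:
  assumes X: "X \<in> wedge_span P" and Y: "Y \<in> wedge_span P"
  shows "X + Y \<in> wedge_span P"
proof -
  obtain m :: nat and c a b where P: "\<forall>i<m. (a i, b i) \<in> P"
    and Y: "Y = (\<Sum>i<m. tscale (c i) (wedge (a i) (b i)))"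
    using Y unfolding wedge_span_def by (auto simp del: lessThan_iff)
  have "X + (\<Sum>i<n. tscale (c i) (wedge (a i) (b i))) \<in> wedge_span P" if "n \<le> m" for n
    using that
  proof (induction n)
    case 0
    then show ?case using X by simp
  next
    case (Suc n)
    then show ?case using P by (simp add: wedge_span_add_single flip: add.assoc)
  qed
  then show ?thesis unfolding Y by blast
qed

lemma wedge_span_sum:
  "(\<And>s. s \<in> S \<Longrightarrow> f s \<in> wedge_span P) \<Longrightarrow> sum f S \<in> wedge_span P"
  by (induction S rule: infinite_finite_induct) (auto intro: wedge_span_zero wedge_span_add)

lemma matrix_add_rdistrib: "(A + B) ** C = A ** C + B ** (C :: 'a::semiring_1 ^ _ ^ _)"
  by (simp add: matrix_matrix_mult_def vec_eq_iff ring_distribs sum.distrib)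

lemma matrix_mul_uminus_left: "(- A) ** B = - (A ** (B :: 'a::ring_1 ^ _ ^ _))"
  by (simp add: matrix_matrix_mult_def vec_eq_iff sum_negf)

lemma matrix_mul_uminus_right: "A ** (- B) = - (A ** (B :: 'a::ring_1 ^ _ ^ _))"
  by (simp add: matrix_matrix_mult_def vec_eq_iff sum_negf)

lemma transpose_add: "transpose (A + B) = transpose A + transpose B"
  by (simp add: transpose_def vec_eq_iff)

lemma matrix_vector_mult_axis: "A *v axis k 1 = column k (A :: 'a::semiring_1 ^ _ ^ _)"
  by (simp add: vec_eq_iff matrix_vector_mult_def column_def axis_def if_distrib cong: if_cong)

lemma sandwich_decomposition:
  fixes A P Q C :: "'a::comm_semiring_1 ^ 'n ^ 'n"
  assumes "P + Q = mat 1" and "C + C = A"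
  shows "A = P ** A ** transpose P + (P ** A ** transpose Q + Q ** A ** transpose P)
    + (Q ** C ** transpose Q + Q ** C ** transpose Q)"
proof -
  have "A = (P + Q) ** A ** transpose (P + Q)"
    unfolding assms(1) by simp
  also have "\<dots> = P ** A ** transpose P + P ** A ** transpose Q + Q ** A ** transpose P
      + Q ** (C + C) ** transpose Q"
    unfolding assms(2) by (simp add: matrix_add_ldistrib matrix_add_rdistrib transpose_add add_ac)
  finally show ?thesis
    by (simp add: matrix_add_ldistrib matrix_add_rdistrib add_ac)
qed

lemma sum_tscale_wedge_columns:
  fixes C U V :: "'k::field ^ 'n ^ 'n"
  shows "(\<Sum>k\<in>UNIV. \<Sum>l\<in>UNIV. tscale (C $ k $ l) (wedge (column k U) (column l V)))
    = U ** C ** transpose V - V ** transpose C ** transpose U"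
proof -
  have "(\<Sum>k\<in>UNIV. \<Sum>l\<in>UNIV. C $ k $ l * (U $ i $ k * V $ j $ l - V $ i $ l * U $ j $ k))
    = (\<Sum>l\<in>UNIV. (\<Sum>k\<in>UNIV. U $ i $ k * C $ k $ l) * V $ j $ l)
      - (\<Sum>l\<in>UNIV. (\<Sum>k\<in>UNIV. V $ i $ k * C $ l $ k) * U $ j $ l)" for i j
    by (simp add: right_diff_distrib sum_subtractf sum_distrib_left sum_distrib_right mult_ac)
      (subst sum.swap, simp)
  then show ?thesis
    by (simp add: vec_eq_iff matrix_matrix_mult_def transpose_def column_def wedge_def
        tensor_def tscale_def)
qed

lemma Lambda2_transpose:
  assumes "A \<in> Lambda2"
  shows "transpose A = - A"
proof -
  have "transpose A $ i $ j = (- A) $ i $ j" for i j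
  proof -
    have "A $ j $ i = - (A $ i $ j)" using assms unfolding Lambda2_def by blast
    then show ?thesis by (simp add: transpose_def)
  qed
  then show ?thesis by (simp add: vec_eq_iff)
qed

lemma Lambda2_tscale:
  assumes "A \<in> Lambda2"
  shows "tscale c A \<in> Lambda2"
proof -
  have "tscale c A $ i $ j = - (tscale c A $ j $ i)" for i j
  proof -
    have "A $ i $ j = - (A $ j $ i)" using assms unfolding Lambda2_def by blast
    then show ?thesis by (simp add: tscale_def)
  qed
  then show ?thesis unfolding Lambda2_def by blast
qed

lemma wedge_span_antisymmetric_sandwich:
  fixes C U V :: "'k::field ^ 'n ^ 'n"
  assumes "C \<in> Lambda2" and "\<And>k l. (column k U, column l V) \<in> P"
  shows "U ** C ** transpose V + V ** C ** transpose U \<in> wedge_span P"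
proof -
  have "U ** C ** transpose V + V ** C ** transpose U
      = (\<Sum>k\<in>UNIV. \<Sum>l\<in>UNIV. tscale (C $ k $ l) (wedge (column k U) (column l V)))"
    unfolding sum_tscale_wedge_columns Lambda2_transpose[OF assms(1)] matrix_mul_assoc[symmetric]
    by (simp add: matrix_mul_uminus_left matrix_mul_uminus_right)
  also have "\<dots> \<in> wedge_span P"
    by (intro wedge_span_sum wedge_span_single assms(2))
  finally show ?thesis .
qed

lemma subspace_sum: "is_subspace S \<Longrightarrow> (\<And>i. i \<in> I \<Longrightarrow> f i \<in> S) \<Longrightarrow> sum f I \<in> S"
  unfolding is_subspace_def by (induction I rule: infinite_finite_induct) auto

lemma subspace_diff: "is_subspace S \<Longrightarrow> a \<in> S \<Longrightarrow> b \<in> S \<Longrightarrow> a - b \<in> S"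
  unfolding is_subspace_def
  by (metis diff_conv_add_uminus vector_sneg_minus1)

lemma complement_projection_matrix:
  fixes W Z :: "('k::field ^ 'n) set"
  assumes "is_linear_complement W Z" and "is_subspace Z"
  obtains P :: "'k ^ 'n ^ 'n" where "\<And>v. P *v v \<in> W" and "\<And>v. v - P *v v \<in> Z"
proof -
  have "\<forall>k. \<exists>w. w \<in> W \<and> axis k 1 - w \<in> Z"
    using assms(1) unfolding is_linear_complement_def by (metis add_diff_cancel_left')
  then obtain w where w: "\<And>k. w k \<in> W" and z: "\<And>k. axis k 1 - w k \<in> Z"
    by metis
  define P :: "'k ^ 'n ^ 'n" where "P = (\<chi> i k. w k $ i)"
  have Pv: "P *v v = (\<Sum>k\<in>UNIV. v $ k *s w k)" for v
    by (simp add: matrix_mult_sum P_def column_def)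
  show thesis
  proof
    show "P *v v \<in> W" for v
      unfolding Pv using assms(1) w
      by (intro subspace_sum) (auto simp: is_linear_complement_def is_subspace_def)
    have diff: "v - P *v v = (\<Sum>k\<in>UNIV. v $ k *s (axis k 1 - w k))" for v
      by (subst (1) basis_expansion[symmetric])
        (simp add: Pv sum_subtractf)
    show "v - P *v v \<in> Z" for v
      unfolding diff by (intro subspace_sum assms(2)) (meson assms(2) z is_subspace_def)
  qed
qed

lemma complement_projection_eq_0:
  assumes "is_linear_complement W Z" "is_subspace Z"
    and "\<And>v. P *v v \<in> W" "\<And>v. v - P *v v \<in> Z" and "z \<in> Z"
  shows "P *v z = 0"
proof -
  have "P *v z = z - (z - P *v z)" by simp
  then have "P *v z \<in> Z" using assms(2,4,5) subspace_diff by metis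
  then show ?thesis using assms(1,3) unfolding is_linear_complement_def by blast
qed

definition ad_matrix :: "('k::field ^ 'n \<Rightarrow> 'k ^ 'n \<Rightarrow> 'k ^ 'n) \<Rightarrow> 'k ^ 'n \<Rightarrow> 'k ^ 'n ^ 'n" where
  "ad_matrix br x = (\<chi> i k. br x (axis k 1) $ i)"

lemma sum_mult_axis: "(\<Sum>l\<in>UNIV. f l * axis l (1::'a::semiring_1) $ j) = f j"
proof -
  have "(\<Sum>l\<in>UNIV. f l * axis l (1::'a) $ j) = (\<Sum>l\<in>UNIV. if l = j then f j else 0)"
    by (rule sum.cong) (auto simp: axis_def)
  then show ?thesis by simp
qed

lemma ad2_eq_ad_matrix: "ad2 br x A = ad_matrix br x ** A + A ** transpose (ad_matrix br x)"
proof -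
  let ?M = "ad_matrix br x"
  have "ad2 br x A $ i $ j = (\<Sum>k\<in>UNIV. \<Sum>l\<in>UNIV. ?M $ i $ k * A $ k $ l * axis l 1 $ j)
      + (\<Sum>l\<in>UNIV. \<Sum>k\<in>UNIV. A $ k $ l * ?M $ j $ l * axis k 1 $ i)" for i j
    by (simp add: ad2_def ad_matrix_def tscale_def tensor_def distrib_left sum.distrib mult_ac)
      (subst (2) sum.swap, simp)
  then show ?thesis
    by (simp add: vec_eq_iff matrix_matrix_mult_def transpose_def sum_mult_axis
        sum_distrib_right[symmetric])
qed

lemma lie_bracket_zero_right:
  assumes "is_lie_bracket br"
  shows "br x 0 = 0"
  using assms unfolding is_lie_bracket_def by (metis vector_smult_lzero)

lemma lie_bracket_sum:
  assumes "is_lie_bracket br"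
  shows "br x (sum f S) = (\<Sum>s\<in>S. br x (f s))"
  using assms lie_bracket_zero_right[OF assms] unfolding is_lie_bracket_def
  by (induction S rule: infinite_finite_induct) simp_all

lemma ad_matrix_mult:
  assumes "is_lie_bracket br"
  shows "ad_matrix br x *v v = br x v"
proof -
  have "ad_matrix br x *v v = (\<Sum>k\<in>UNIV. br x (v $ k *s axis k 1))"
    using assms
    by (simp add: matrix_mult_sum column_def ad_matrix_def is_lie_bracket_def)
  also have "\<dots> = br x v"
    by (simp add: lie_bracket_sum[OF assms, symmetric] basis_expansion)
  finally show ?thesis .
qed

lemma lie_center_subspace: "is_lie_bracket br \<Longrightarrow> is_subspace (lie_center br)"
  using lie_bracket_zero_right[of br]
  by (simp add: is_subspace_def lie_center_def is_lie_bracket_def)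

lemma two_step_bracket_central: "two_step_nilpotent br \<Longrightarrow> br x y \<in> lie_center br"
  by (simp add: two_step_nilpotent_def lie_center_def)

lemma invariant_projection_sandwich_vanishes:
  fixes br :: "'k::field ^ 'n \<Rightarrow> 'k ^ 'n \<Rightarrow> 'k ^ 'n"
  assumes lie: "is_lie_bracket br" and nil: "two_step_nilpotent br"
    and compl: "is_linear_complement W (lie_center br)"
    and P_W: "\<And>v. P *v v \<in> W" and P_Z: "\<And>v. v - P *v v \<in> lie_center br"
    and inv: "\<And>x. ad2 br x A = 0"
  shows "P ** A ** transpose P = 0"
proof -
  let ?M = "ad_matrix br" and ?B = "P ** A ** transpose P"
  have MP: "?M x ** P = ?M x" for x
  proof -
    have "br x (P *v v) = br x v" for v
    proof -
      have "br x v = br x (P *v v + (v - P *v v))" by simp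
      also have "\<dots> = br x (P *v v) + br x (v - P *v v)"
        using lie unfolding is_lie_bracket_def by blast
      also have "\<dots> = br x (P *v v)"
        using P_Z[of v] unfolding lie_center_def by simp
      finally show ?thesis by simp
    qed
    then show ?thesis
      by (simp add: matrix_eq matrix_vector_mul_assoc[symmetric] ad_matrix_mult[OF lie])
  qed
  have PM: "P ** ?M x = 0" for x
    using complement_projection_eq_0[OF compl lie_center_subspace[OF lie] P_W P_Z
        two_step_bracket_central[OF nil]]
    by (simp add: matrix_eq matrix_vector_mul_assoc[symmetric] ad_matrix_mult[OF lie])
  have MB: "?M x ** ?B = 0" for x
  proof -
    have MA: "?M x ** A = - (A ** transpose (?M x))"
      using inv[of x] unfolding ad2_eq_ad_matrix by (simp add: eq_neg_iff_add_eq_0)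
    have "?M x ** ?B = (?M x ** P) ** A ** transpose P"
      by (simp add: matrix_mul_assoc)
    also have "\<dots> = - (A ** transpose (P ** ?M x))"
      by (simp add: MP MA matrix_mul_uminus_left matrix_transpose_mul matrix_mul_assoc)
    also have "\<dots> = 0"
      unfolding PM by (simp add: transpose_def vec_eq_iff matrix_matrix_mult_def)
    finally show ?thesis .
  qed
  have "?B *v v = 0" for v
  proof -
    have "?B *v v \<in> lie_center br"
      using MB by (simp add: lie_center_def ad_matrix_mult[OF lie, symmetric] matrix_vector_mul_assoc)
    moreover have "?B *v v \<in> W"
      using P_W by (simp add: matrix_vector_mul_assoc[symmetric] matrix_mul_assoc[symmetric])
    ultimately show ?thesis using compl unfolding is_linear_complement_def by blast
  qed
  then show ?thesis by (simp add: matrix_eq)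
qed

theorem mainTheorem3:
  fixes br :: "'k::field_char_0 ^ 'n \<Rightarrow> 'k ^ 'n \<Rightarrow> 'k ^ 'n"
    and W :: "('k ^ 'n) set"
  assumes "is_lie_bracket br"
    and "two_step_nilpotent br"
    and "is_linear_complement W (lie_center br)"
  shows "invariants2 br \<subseteq>
           wedge_span ({(w, z). w \<in> W \<and> z \<in> lie_center br} \<union>
                       {(z, z'). z \<in> lie_center br \<and> z' \<in> lie_center br})"
proof
  let ?S = "{(w, z). w \<in> W \<and> z \<in> lie_center br} \<union>
            {(z, z'). z \<in> lie_center br \<and> z' \<in> lie_center br}"
  fix A assume "A \<in> invariants2 br"
  then have A: "A \<in> Lambda2" and inv: "\<And>x. ad2 br x A = 0"
    unfolding invariants2_def by blast+
  obtain P where P_W: "\<And>v. P *v v \<in> W" and P_Z: "\<And>v. v - P *v v \<in> lie_center br"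
    using complement_projection_matrix[OF assms(3) lie_center_subspace[OF assms(1)]] by blast
  define Q :: "'k ^ 'n ^ 'n" where "Q = mat 1 - P"
  define C where "C = tscale (1/2) A"
  have col_P: "column k P \<in> W" and col_Q: "column k Q \<in> lie_center br" for k
    using P_W P_Z by (simp_all add: Q_def matrix_vector_mult_axis[symmetric]
        matrix_vector_mult_diff_rdistrib)
  have "A = P ** A ** transpose P + (P ** A ** transpose Q + Q ** A ** transpose P)
      + (Q ** C ** transpose Q + Q ** C ** transpose Q)"
    by (rule sandwich_decomposition) (simp_all add: Q_def C_def tscale_def vec_eq_iff field_simps)
  moreover have "P ** A ** transpose P = 0"
    using invariant_projection_sandwich_vanishes[OF assms P_W P_Z inv] .
  moreover have "P ** A ** transpose Q + Q ** A ** transpose P \<in> wedge_span ?S"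
    using A col_P col_Q by (intro wedge_span_antisymmetric_sandwich) auto
  moreover have "Q ** C ** transpose Q + Q ** C ** transpose Q \<in> wedge_span ?S"
    using Lambda2_tscale[OF A] col_Q unfolding C_def
    by (intro wedge_span_antisymmetric_sandwich) auto
  ultimately show "A \<in> wedge_span ?S"
    by (metis add_0 wedge_span_add)
qed

end
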